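(* Let $M$ be a closed manifold immersed in $(V,\omega)=(\mathbb{R}^{2d},\sum_i dx_i\wedge dy_i)$, let $\mathbf{Z}=(z_1,\dots,z_n,z_{n+1})$ be an outer symplectic billiard orbit, and let $A(\mathbf{Z})=\tfrac12\sum_{i=1}^n\omega(z_i,z_{i+1})$ and $\mathbf{Q}=(Q_1,\dots,Q_n)$, $Q_i=\tfrac12(z_i+z_{i+1})$. If $\mathbf{Z}$ is an $n$-periodic orbit ($z_{n+1}=z_1$) with $n$ odd, then $A(\mathbf{Z})=F(\mathbf{Q})$, where $F(Q_1,\dots,Q_n)=2\sum_{1\le i<j\le n}(-1)^{i+j-1}\omega(Q_i,Q_j)$. If $\mathbf{Z}$ is an $n$-link orbit connecting $L_1=\mathbb{R}^d_x\times\{0\}$ and $L_2=\{0\}\times\mathbb{R}^d_y$, then $A(\mathbf{Z})=G(\mathbf{Q})$, where, writing $Q_i=(q_i,q_i')$, $G(\mathbf{Q})=2\sum_{i=1}^nq_i\cdot q_i'+4\sum_{1\le i<j\le n}(-1)^{j-i}q_j\cdot q_i'$.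
   Context: $\omega((x,y),(x',y'))=x\cdot y'-y\cdot x'$. Two points $z,z'$ are in outer symplectic billiard correspondence with respect to $M$ if $Q=\tfrac12(z+z')$ is a point of $M$ and $\omega(z'-z,\zeta)=0$ for all $\zeta\in T_QM$. An $n$-periodic orbit is $(z_1,\dots,z_n)$ with $z_i,z_{i+1}$ in correspondence for all $i$ (indices mod $n$). An $n$-link orbit connecting $L_1$ and $L_2$ is $(z_1,\dots,z_{n+1})$ with $z_1\in L_1$, $z_{n+1}\in L_2$ and $z_i,z_{i+1}$ in correspondence for $i=1,\dots,n$. *)

theory Defs
  imports "HOL-Analysis.Analysis"
begin

type_synonym 'd sympl = "(real ^ 'd) \<times> (real ^ 'd)"

definition omega :: "'d::finite sympl \<Rightarrow> 'd sympl \<Rightarrow> real" where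
  "omega z w = fst z \<bullet> snd w - snd z \<bullet> fst w"

text \<open>An immersed submanifold M is represented by its set of pointed tangent planes:
  pairs (Q, T) where Q is a point of M and T the tangent space of M at Q along a branch
  of the immersion (at a self-intersection point there is one pair per branch).\<close>
definition immersed_closed_data :: "('d::finite sympl \<times> 'd sympl set) set \<Rightarrow> bool" where
  "immersed_closed_data P \<longleftrightarrow> compact (fst ` P) \<and> (\<forall>(Q,T)\<in>P. subspace T)"

definition corresp :: "('d::finite sympl \<times> 'd sympl set) set \<Rightarrow> 'd sympl \<Rightarrow> 'd sympl \<Rightarrow> bool" where
  "corresp P z z' \<longleftrightarrow> (\<exists>(Q,T)\<in>P. Q = (1/2) *\<^sub>R (z + z') \<and> (\<forall>\<zeta>\<in>T. omega (z' - z) \<zeta> = 0))"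

text \<open>Orbits are indexed z 1, ..., z (n+1).\<close>
definition periodic_orbit :: "('d::finite sympl \<times> 'd sympl set) set \<Rightarrow> nat \<Rightarrow> (nat \<Rightarrow> 'd sympl) \<Rightarrow> bool" where
  "periodic_orbit P n z \<longleftrightarrow> n \<ge> 1 \<and> z (n+1) = z 1 \<and> (\<forall>i\<in>{1..n}. corresp P (z i) (z (i+1)))"

definition L1 :: "'d::finite sympl set" where "L1 = {z. snd z = 0}"
definition L2 :: "'d::finite sympl set" where "L2 = {z. fst z = 0}"

definition link_orbit :: "('d::finite sympl \<times> 'd sympl set) set \<Rightarrow> nat \<Rightarrow> 'd sympl set \<Rightarrow> 'd sympl set \<Rightarrow> (nat \<Rightarrow> 'd sympl) \<Rightarrow> bool" where
  "link_orbit P n A B z \<longleftrightarrow> n \<ge> 1 \<and> z 1 \<in> A \<and> z (n+1) \<in> B \<and> (\<forall>i\<in>{1..n}. corresp P (z i) (z (i+1)))"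

definition action :: "nat \<Rightarrow> (nat \<Rightarrow> 'd::finite sympl) \<Rightarrow> real" where
  "action n z = (1/2) * (\<Sum>i=1..n. omega (z i) (z (i+1)))"

definition midpts :: "(nat \<Rightarrow> 'd::finite sympl) \<Rightarrow> nat \<Rightarrow> 'd sympl" where
  "midpts z i = (1/2) *\<^sub>R (z i + z (i+1))"

definition Ffun :: "nat \<Rightarrow> (nat \<Rightarrow> 'd::finite sympl) \<Rightarrow> real" where
  "Ffun n Q = 2 * (\<Sum>j=1..n. \<Sum>i=1..<j. (-1) ^ (i + j - 1) * omega (Q i) (Q j))"

definition Gfun :: "nat \<Rightarrow> (nat \<Rightarrow> 'd::finite sympl) \<Rightarrow> real" where
  "Gfun n Q = 2 * (\<Sum>i=1..n. fst (Q i) \<bullet> snd (Q i))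
     + 4 * (\<Sum>j=1..n. \<Sum>i=1..<j. (-1) ^ (j - i) * (fst (Q j) \<bullet> snd (Q i)))"

end

theory Submission
  imports Defs
begin

(* Since Q_i is the midpoint of z_i and z_(i+1), the point z_(i+1) = 2 Q_i - z_i is the reflection
   of z_i in Q_i, hence z_(k+1) = (-1)^k (z_1 - 2 W_k) for the alternating sum
   W_k = Q_1 - Q_2 + ... +- Q_k.  With omega(z_i, z_(i+1)) = 2 omega(z_i, Q_i) this gives
   A(Z) = omega(z_1, W_n) + F(Q).  For a periodic orbit with n odd the closing condition forces
   z_1 = W_n, so the boundary term vanishes.  For a link orbit from L1 to L2 it forces z_1 = (2X, 0)
   where W_n = (X, Y), so the boundary term is 2 X.Y, and expanding X.Y as a double sum and
   combining it with F gives G. *)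

interpretation omega: bounded_bilinear "omega :: 'd::finite sympl \<Rightarrow> _"
  unfolding bilinear_conv_bounded_bilinear[symmetric] bilinear_def omega_def
  by (auto intro!: linearI simp: algebra_simps)

lemma omega_self [simp]: "omega z z = 0"
  unfolding omega_def by (simp add: inner_commute)

definition alt_sum :: "nat \<Rightarrow> (nat \<Rightarrow> 'a::real_vector) \<Rightarrow> 'a" where
  "alt_sum n Q = (\<Sum>i=1..n. (-1) ^ (i+1) *\<^sub>R Q i)"

lemma alt_sum_Suc: "alt_sum (Suc n) Q = alt_sum n Q + (-1) ^ n *\<^sub>R Q (Suc n)"
  by (simp add: alt_sum_def)

lemma iterated_point_reflection:
  fixes z Q :: "nat \<Rightarrow> 'a::real_vector"
  assumes midpoint: "\<And>i. Q i = (1/2) *\<^sub>R (z i + z (Suc i))"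
  shows "z (Suc n) = (-1) ^ n *\<^sub>R (z 1 - 2 *\<^sub>R alt_sum n Q)"
proof (induction n)
  case 0
  then show ?case by (simp add: alt_sum_def)
next
  case (Suc n)
  have "z (Suc (Suc n)) = 2 *\<^sub>R Q (Suc n) - z (Suc n)"
    by (simp add: midpoint scaleR_add_right)
  then show ?case
    by (simp add: Suc alt_sum_Suc algebra_simps)
qed

lemma orbit_point_eq_alt_sum_midpts:
  "z (Suc n) = (-1) ^ n *\<^sub>R (z 1 - 2 *\<^sub>R alt_sum n (midpts z))"
  by (rule iterated_point_reflection) (simp add: midpts_def)

lemma action_eq_omega_alt_sum_plus_Ffun:
  "action n z = omega (z 1) (alt_sum n (midpts z)) + Ffun n (midpts z)"
proof -
  let ?Q = "midpts z"
  have double: "omega (z i) (z (Suc i)) = 2 * omega (z i) (?Q i)" for i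
  proof -
    have "z (Suc i) = 2 *\<^sub>R ?Q i - z i"
      by (simp add: midpts_def scaleR_add_right)
    then show ?thesis by (simp add: omega.diff_right omega.scaleR_right)
  qed
  have expand: "omega (z i) (?Q i) = (-1) ^ (i+1) * omega (z 1) (?Q i)
      + 2 * (\<Sum>k=1..<i. (-1) ^ (k+i-1) * omega (?Q k) (?Q i))" if "1 \<le> i" for i
  proof -
    obtain m where i: "i = Suc m" using \<open>1 \<le> i\<close> by (cases i) auto
    show ?thesis
      unfolding i orbit_point_eq_alt_sum_midpts[of z m] alt_sum_def
        omega.scaleR_left omega.diff_left omega.sum_left real_scaleR_def
      by (simp add: sum_distrib_left sum_negf atLeastLessThanSuc_atLeastAtMost power_add algebra_simps)
  qed
  have "action n z = (\<Sum>i=1..n. omega (z i) (?Q i))"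
    by (simp add: action_def double sum_distrib_left[symmetric])
  also have "\<dots> = omega (z 1) (alt_sum n ?Q) + Ffun n ?Q"
    by (simp add: expand alt_sum_def Ffun_def omega.sum_right omega.scaleR_right omega.minus_right
        sum.distrib sum_subtractf sum_negf sum_distrib_left)
  finally show ?thesis .
qed

lemma sum_square_diagonal_triangles:
  fixes f :: "nat \<Rightarrow> nat \<Rightarrow> 'a::comm_monoid_add"
  shows "(\<Sum>i=1..n. \<Sum>k=1..n. f i k) = (\<Sum>i=1..n. f i i) + (\<Sum>j=1..n. \<Sum>i=1..<j. f i j + f j i)"
  by (induction n) (simp_all add: sum.distrib atLeastLessThanSuc_atLeastAtMost ac_simps)

lemma inner_fst_snd_alt_sum:
  "fst (alt_sum n Q) \<bullet> snd (alt_sum n Q) = (\<Sum>i=1..n. fst (Q i) \<bullet> snd (Q i))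
     + (\<Sum>j=1..n. \<Sum>i=1..<j. (-1) ^ (i+j) * (fst (Q j) \<bullet> snd (Q i) + fst (Q i) \<bullet> snd (Q j)))"
proof -
  define c where "c i k = fst (Q i) \<bullet> snd (Q k)" for i k
  have "fst (alt_sum n Q) \<bullet> snd (alt_sum n Q) = (\<Sum>k=1..n. \<Sum>i=1..n. (-1) ^ (i+k) * c i k)"
    by (simp add: alt_sum_def c_def fst_sum snd_sum inner_sum_left inner_sum_right power_add
        sum_negf sum_distrib_left algebra_simps)
  also have "\<dots> = (\<Sum>i=1..n. c i i) + (\<Sum>j=1..n. \<Sum>i=1..<j. (-1) ^ (i+j) * (c j i + c i j))"
    unfolding sum_square_diagonal_triangles[of "\<lambda>k i. (-1) ^ (i+k) * c i k"]
    by (simp add: distrib_left power_add add.commute)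
  finally show ?thesis
    by (simp add: c_def)
qed

lemma Gfun_eq_inner_alt_sum_plus_Ffun:
  "Gfun n Q = 2 * (fst (alt_sum n Q) \<bullet> snd (alt_sum n Q)) + Ffun n Q"
proof -
  define c where "c i k = fst (Q i) \<bullet> snd (Q k)" for i k
  have pair: "(-1) ^ (i+j) * (c j i + c i j) + (-1) ^ (i+j-1) * omega (Q i) (Q j)
      = 2 * ((-1) ^ (j-i) * c j i)" if ij: "i < j" for i j
  proof -
    obtain m where "i + j = Suc m"
      using ij by (cases "i + j") auto
    then have "(-1::real) ^ (i+j-1) = - ((-1) ^ (i+j))"
      by simp
    moreover have "(-1::real) ^ (j-i) = (-1) ^ (i+j)"
      using ij by (metis add.commute less_imp_le neg_one_power_add_eq_neg_one_power_diff)
    ultimately show ?thesis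
      by (simp add: c_def omega_def inner_commute algebra_simps)
  qed
  have "Gfun n Q = 2 * (\<Sum>i=1..n. c i i) + 2 * (\<Sum>j=1..n. \<Sum>i=1..<j. 2 * ((-1) ^ (j-i) * c j i))"
    by (simp add: Gfun_def c_def sum_distrib_left)
  also have "\<dots> = 2 * (\<Sum>i=1..n. c i i) + 2 * (\<Sum>j=1..n. \<Sum>i=1..<j.
      (-1) ^ (i+j) * (c j i + c i j) + (-1) ^ (i+j-1) * omega (Q i) (Q j))"
    by (simp add: pair[symmetric])
  also have "\<dots> = 2 * (fst (alt_sum n Q) \<bullet> snd (alt_sum n Q)) + Ffun n Q"
    by (simp add: inner_fst_snd_alt_sum c_def Ffun_def sum.distrib distrib_left)
  finally show ?thesis .
qed

lemma action_eq_Ffun_if_closed_odd: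
  assumes closed: "z (Suc n) = z 1" and "odd n"
  shows "action n z = Ffun n (midpts z)"
proof -
  let ?W = "alt_sum n (midpts z)"
  have "z 1 = - (z 1 - 2 *\<^sub>R ?W)"
    using orbit_point_eq_alt_sum_midpts[of z n] closed \<open>odd n\<close> by simp
  then have "(2::real) *\<^sub>R (z 1 - ?W) = 0"
    by (simp add: algebra_simps scaleR_2)
  then have "z 1 = ?W"
    by simp
  then show ?thesis
    by (simp add: action_eq_omega_alt_sum_plus_Ffun)
qed

lemma action_eq_Gfun_if_axes_endpoints:
  assumes first: "snd (z 1) = 0" and last: "fst (z (Suc n)) = 0"
  shows "action n z = Gfun n (midpts z)"
proof -
  let ?W = "alt_sum n (midpts z)"
  have "(-1) ^ n *\<^sub>R (fst (z 1) - 2 *\<^sub>R fst ?W) = 0"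
    using arg_cong[OF orbit_point_eq_alt_sum_midpts[of z n], of fst] last by simp
  then have "fst (z 1) = 2 *\<^sub>R fst ?W"
    by simp
  then have "omega (z 1) ?W = 2 * (fst ?W \<bullet> snd ?W)"
    using first by (simp add: omega_def)
  then show ?thesis
    by (simp add: action_eq_omega_alt_sum_plus_Ffun Gfun_eq_inner_alt_sum_plus_Ffun)
qed

theorem mainTheorem12:
  fixes P :: "('d::finite sympl \<times> 'd sympl set) set"
    and n :: nat and z :: "nat \<Rightarrow> 'd sympl"
  assumes "immersed_closed_data P"
  shows "(periodic_orbit P n z \<and> odd n \<longrightarrow> action n z = Ffun n (midpts z))
       \<and> (link_orbit P n L1 L2 z \<longrightarrow> action n z = Gfun n (midpts z))"
  by (auto simp: periodic_orbit_def link_orbit_def L1_def L2_def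
      intro: action_eq_Ffun_if_closed_odd action_eq_Gfun_if_axes_endpoints)

end
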